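(* Let $G=(V,E)$ be an undirected unweighted network with girth $g$, let $S\subseteq V$ and let $k$ be a natural number. Let $M$ be the value computed by procedure Estimate$(G,S,k)$ (described in the context). Then $g\le M$, and if $\mathcal{C}\neq\emptyset$ then $M\le 2d(S)+g$.
   Context: Vertices have distinct identifiers $ID(\cdot)$; $d(u,v)$ is the hop distance. A vertex $v$ is closer to $u$ than $w$ if $d(u,v)<d(u,w)$, or $d(u,v)=d(u,w)$ and $ID(v)<ID(w)$. For $v\in V$, $U(S,k,v)$ is the set of the $k$ vertices of $S$ closest to $v$, or $S$ itself if $|S|\le k$. A source $s\in S$ covers a cycle $C$ if $s\in U(S,k,v)$ for all $v\in V(C)$; then $d(s,C)=\min_{v\in V(C)}d(s,v)$ and, for a covered cycle, $d(S,C)=\min\{d(s,C): s\in S \text{ covers } C\}$. $\mathcal{C}$ is the set of shortest cycles of $G$ covered by some source, and when $\mathcal{C}\neq\emptyset$, $d(S)=\min\{d(S,C):C\in\mathcal{C}\}$. Procedure Estimate$(G,S,k)$: (i) partial BFS trees rooted at the sources are built so that each vertex $v$ learns $U(S,k,v)$ together with $d(s,v)$ and a BFS parent $p(s,v)$ (a neighbor of $v$ with $d(s,p(s,v))=d(s,v)-1$; undefined if $v=s$) for each $s\in U(S,k,v)$; (ii) each vertex sends this information to its neighbors; (iii) each vertex $y$ sets $M_y=\min\, (d(s,x)+d(s,y)+1)$ over all neighbors $x$ of $y$ and all $s\in U(S,k,y)\cap U(S,k,x)$ with $p(s,x)\neq y$ and $p(s,y)\neq x$ ($M_y=\infty$ if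 there are none); (iv) $M=\min_{v\in V}M_v$ is computed and made known to all vertices. The girth $g$ is $\infty$ if $G$ is acyclic. *)

theory Defs
  imports Main "HOL-Library.Extended_Nat"
begin

definition simple_graph :: "'a set \<Rightarrow> ('a \<Rightarrow> 'a \<Rightarrow> bool) \<Rightarrow> bool" where
  "simple_graph V E \<longleftrightarrow> finite V \<and> (\<forall>u v. E u v \<longrightarrow> u \<in> V \<and> v \<in> V \<and> u \<noteq> v \<and> E v u)"

definition is_walk :: "'a set \<Rightarrow> ('a \<Rightarrow> 'a \<Rightarrow> bool) \<Rightarrow> 'a list \<Rightarrow> bool" where
  "is_walk V E xs \<longleftrightarrow> xs \<noteq> [] \<and> set xs \<subseteq> V \<and> (\<forall>i. Suc i < length xs \<longrightarrow> E (xs ! i) (xs ! Suc i))"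

text \<open>Hop distance (infinite if unreachable).\<close>
definition hop_dist :: "'a set \<Rightarrow> ('a \<Rightarrow> 'a \<Rightarrow> bool) \<Rightarrow> 'a \<Rightarrow> 'a \<Rightarrow> enat" where
  "hop_dist V E u v = Inf {enat (length xs - 1) | xs. is_walk V E xs \<and> hd xs = u \<and> last xs = v}"

definition connected_graph :: "'a set \<Rightarrow> ('a \<Rightarrow> 'a \<Rightarrow> bool) \<Rightarrow> bool" where
  "connected_graph V E \<longleftrightarrow> (\<forall>u\<in>V. \<forall>v\<in>V. hop_dist V E u v < \<infinity>)"

text \<open>A cycle given as the cyclic list of its (distinct) vertices; its length is the
number of vertices (= number of edges).\<close>
definition is_cycle :: "'a set \<Rightarrow> ('a \<Rightarrow> 'a \<Rightarrow> bool) \<Rightarrow> 'a list \<Rightarrow> bool" where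
  "is_cycle V E c \<longleftrightarrow> length c \<ge> 3 \<and> distinct c \<and> set c \<subseteq> V \<and>
     (\<forall>i < length c. E (c ! i) (c ! ((i + 1) mod length c)))"

definition girth :: "'a set \<Rightarrow> ('a \<Rightarrow> 'a \<Rightarrow> bool) \<Rightarrow> enat" where
  "girth V E = Inf {enat (length c) | c. is_cycle V E c}"

definition shortest_cycle :: "'a set \<Rightarrow> ('a \<Rightarrow> 'a \<Rightarrow> bool) \<Rightarrow> 'a list \<Rightarrow> bool" where
  "shortest_cycle V E c \<longleftrightarrow> is_cycle V E c \<and> enat (length c) = girth V E"

definition closer :: "'a set \<Rightarrow> ('a \<Rightarrow> 'a \<Rightarrow> bool) \<Rightarrow> ('a \<Rightarrow> nat) \<Rightarrow> 'a \<Rightarrow> 'a \<Rightarrow> 'a \<Rightarrow> bool" where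
  "closer V E ID u v w \<longleftrightarrow> hop_dist V E u v < hop_dist V E u w \<or>
      (hop_dist V E u v = hop_dist V E u w \<and> ID v < ID w)"

text \<open>U(S,k,v): the k vertices of S closest to v (S itself if |S| <= k), i.e. those
elements of S having fewer than k elements of S strictly closer to v.\<close>
definition Ucl :: "'a set \<Rightarrow> ('a \<Rightarrow> 'a \<Rightarrow> bool) \<Rightarrow> ('a \<Rightarrow> nat) \<Rightarrow> 'a set \<Rightarrow> nat \<Rightarrow> 'a \<Rightarrow> 'a set" where
  "Ucl V E ID S k v = (if card S \<le> k then S
      else {s \<in> S. card {t \<in> S. closer V E ID v t s} < k})"

definition covers :: "'a set \<Rightarrow> ('a \<Rightarrow> 'a \<Rightarrow> bool) \<Rightarrow> ('a \<Rightarrow> nat) \<Rightarrow> 'a set \<Rightarrow> nat \<Rightarrow> 'a \<Rightarrow> 'a list \<Rightarrow> bool" where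
  "covers V E ID S k s c \<longleftrightarrow> s \<in> S \<and> (\<forall>v \<in> set c. s \<in> Ucl V E ID S k v)"

definition dist_src_cycle :: "'a set \<Rightarrow> ('a \<Rightarrow> 'a \<Rightarrow> bool) \<Rightarrow> 'a \<Rightarrow> 'a list \<Rightarrow> enat" where
  "dist_src_cycle V E s c = Inf ((\<lambda>v. hop_dist V E s v) ` set c)"

definition covered_shortest :: "'a set \<Rightarrow> ('a \<Rightarrow> 'a \<Rightarrow> bool) \<Rightarrow> ('a \<Rightarrow> nat) \<Rightarrow> 'a set \<Rightarrow> nat \<Rightarrow> 'a list set" where
  "covered_shortest V E ID S k = {c. shortest_cycle V E c \<and> (\<exists>s \<in> S. covers V E ID S k s c)}"

definition dist_S_cycle :: "'a set \<Rightarrow> ('a \<Rightarrow> 'a \<Rightarrow> bool) \<Rightarrow> ('a \<Rightarrow> nat) \<Rightarrow> 'a set \<Rightarrow> nat \<Rightarrow> 'a list \<Rightarrow> enat" where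
  "dist_S_cycle V E ID S k c = Inf {dist_src_cycle V E s c | s. s \<in> S \<and> covers V E ID S k s c}"

definition dS :: "'a set \<Rightarrow> ('a \<Rightarrow> 'a \<Rightarrow> bool) \<Rightarrow> ('a \<Rightarrow> nat) \<Rightarrow> 'a set \<Rightarrow> nat \<Rightarrow> enat" where
  "dS V E ID S k = Inf (dist_S_cycle V E ID S k ` covered_shortest V E ID S k)"

definition valid_parents :: "'a set \<Rightarrow> ('a \<Rightarrow> 'a \<Rightarrow> bool) \<Rightarrow> ('a \<Rightarrow> nat) \<Rightarrow> 'a set \<Rightarrow> nat \<Rightarrow> ('a \<Rightarrow> 'a \<Rightarrow> 'a option) \<Rightarrow> bool" where
  "valid_parents V E ID S k p \<longleftrightarrow>
     (\<forall>v \<in> V. \<forall>s \<in> Ucl V E ID S k v.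
        (v = s \<longrightarrow> p s v = None) \<and>
        (v \<noteq> s \<longrightarrow> (\<exists>w. p s v = Some w \<and> E v w \<and> hop_dist V E s w + 1 = hop_dist V E s v)))"

definition M_at :: "'a set \<Rightarrow> ('a \<Rightarrow> 'a \<Rightarrow> bool) \<Rightarrow> ('a \<Rightarrow> nat) \<Rightarrow> 'a set \<Rightarrow> nat \<Rightarrow> ('a \<Rightarrow> 'a \<Rightarrow> 'a option) \<Rightarrow> 'a \<Rightarrow> enat" where
  "M_at V E ID S k p y = Inf {hop_dist V E s x + hop_dist V E s y + 1 | x s.
      E y x \<and> s \<in> Ucl V E ID S k y \<and> s \<in> Ucl V E ID S k x \<and>
      p s x \<noteq> Some y \<and> p s y \<noteq> Some x}"

definition estimate :: "'a set \<Rightarrow> ('a \<Rightarrow> 'a \<Rightarrow> bool) \<Rightarrow> ('a \<Rightarrow> nat) \<Rightarrow> 'a set \<Rightarrow> nat \<Rightarrow> ('a \<Rightarrow> 'a \<Rightarrow> 'a option) \<Rightarrow> enat" where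
  "estimate V E ID S k p = Inf (M_at V E ID S k p ` V)"

end

(* Lower bound: a term d(s,x) + d(s,y) + 1 of M_y comes from an edge xy that is
   the BFS parent edge of neither endpoint.  Shortest paths from s to x and to y
   (the latter through the parent of y when y is one level farther than x) then
   avoid the edge xy, so together with xy they close a cycle of at most that length.
   Upper bound: let s cover a shortest cycle C whose vertex v is closest to s, with
   d(s,v) = d(S).  Not every edge of C is a parent edge, since a closed walk without
   backtracking along parent edges would climb (or descend) one level per step all
   the way round.  A non-parent edge xy of C gives a term of M_y, and walking along
   C from v in both directions bounds it by 2 d(s,v) + g. *)

theory Submission
  imports Defs
begin

lemma enat_Inf_in: "(A::enat set) \<noteq> {} \<Longrightarrow> Inf A \<in> A"
  unfolding Inf_enat_def by (auto intro: LeastI_ex)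

lemma simple_graph_edge:
  "simple_graph V E \<Longrightarrow> E u v \<Longrightarrow> u \<in> V \<and> v \<in> V \<and> u \<noteq> v \<and> E v u"
  unfolding simple_graph_def by blast

section \<open>Walks\<close>

lemma is_walk_iff_successively:
  "is_walk V R xs \<longleftrightarrow> xs \<noteq> [] \<and> set xs \<subseteq> V \<and> successively R xs"
  unfolding is_walk_def successively_conv_nth by auto

lemma is_walk_rev:
  assumes "is_walk V R xs" and "\<And>a b. R a b \<Longrightarrow> R b a"
  shows "is_walk V R (rev xs)"
proof -
  from assms(1) have "successively R xs"
    by (simp add: is_walk_iff_successively)
  then have "successively (\<lambda>a b. R b a) xs"
    by (rule successively_mono) (rule assms(2))
  with assms(1) show ?thesis
    by (simp add: is_walk_iff_successively)
qed

lemma is_walk_append: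
  assumes "is_walk V R xs" "is_walk V R ys" "last xs = hd ys"
  shows "is_walk V R (xs @ tl ys)" "hd (xs @ tl ys) = hd xs" "last (xs @ tl ys) = last ys"
    "length (xs @ tl ys) = length xs + length ys - 1"
proof -
  obtain y ys' where ys: "ys = y # ys'"
    using assms(2) by (cases ys) (auto simp: is_walk_def)
  have "xs \<noteq> []"
    using assms(1) by (simp add: is_walk_def)
  with assms ys show "is_walk V R (xs @ tl ys)"
    by (auto simp: is_walk_iff_successively successively_append_iff successively_Cons)
  show "hd (xs @ tl ys) = hd xs" "last (xs @ tl ys) = last ys"
    using \<open>xs \<noteq> []\<close> assms(3) ys by auto
  show "length (xs @ tl ys) = length xs + length ys - 1"
    using ys by simp
qed

lemma is_walk_take:
  assumes "is_walk V R P" "i < length P"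
  shows "is_walk V R (take (Suc i) P)"
  using assms unfolding is_walk_def by (auto dest: in_set_takeD)

lemma is_walk_drop:
  assumes "is_walk V R P" "i < length P"
  shows "is_walk V R (drop i P)"
  using assms unfolding is_walk_def by (auto dest: in_set_dropD)

lemma exists_distinct_walk:
  assumes "is_walk V R W"
  shows "\<exists>W'. is_walk V R W' \<and> hd W' = hd W \<and> last W' = last W \<and> distinct W' \<and>
    length W' \<le> length W"
  using assms
proof (induction "length W" arbitrary: W rule: less_induct)
  case less
  show ?case
  proof (cases "distinct W")
    case True
    then show ?thesis using less.prems by blast
  next
    case False
    then obtain a b c z where W: "W = a @ [z] @ b @ [z] @ c"
      using not_distinct_decomp by blast
    let ?W = "a @ [z] @ c"
    have "successively R (a @ (z # b) @ (z # c))" "set W \<subseteq> V"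
      using less.prems unfolding W is_walk_iff_successively by simp_all
    then have "successively R a" "successively R (z # c)" "a = [] \<or> R (last a) z"
      unfolding successively_append_iff by auto
    then have "is_walk V R ?W"
      using \<open>set W \<subseteq> V\<close> unfolding W is_walk_iff_successively successively_append_iff
      by (auto simp: successively_Cons)
    moreover have "hd ?W = hd W" "last ?W = last W" "length ?W < length W"
      unfolding W by (cases a; simp)+
    ultimately obtain W' where "is_walk V R W'" "hd W' = hd W" "last W' = last W"
      "distinct W'" "length W' \<le> length ?W"
      using less.hyps[of ?W] by auto
    then show ?thesis
      using \<open>length ?W < length W\<close> by (intro exI[of _ W']) simp
  qed
qed

section \<open>Hop distance and geodesics\<close>

lemma hop_dist_le_walk:
  "is_walk V E P \<Longrightarrow> hop_dist V E (hd P) (last P) \<le> enat (length P - 1)"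
  unfolding hop_dist_def by (rule Inf_lower) blast

lemma hop_dist_self: "u \<in> V \<Longrightarrow> hop_dist V E u u = 0"
  using hop_dist_le_walk[of V E "[u]"] by (simp add: is_walk_def zero_enat_def[symmetric])

definition geodesic :: "'a set \<Rightarrow> ('a \<Rightarrow> 'a \<Rightarrow> bool) \<Rightarrow> 'a list \<Rightarrow> bool" where
  "geodesic V E P \<longleftrightarrow> is_walk V E P \<and> hop_dist V E (hd P) (last P) = enat (length P - 1)"

lemma geodesic_exists:
  assumes "hop_dist V E u v < \<infinity>"
  obtains P where "geodesic V E P" "hd P = u" "last P = v"
proof -
  let ?A = "{enat (length xs - 1) | xs. is_walk V E xs \<and> hd xs = u \<and> last xs = v}"
  have "?A \<noteq> {}"
  proof
    assume "?A = {}"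
    then have "hop_dist V E u v = \<infinity>"
      unfolding hop_dist_def \<open>?A = {}\<close> by (simp add: top_enat_def)
    with assms show False by simp
  qed
  then have "hop_dist V E u v \<in> ?A"
    unfolding hop_dist_def by (rule enat_Inf_in)
  then obtain P where "is_walk V E P" "hd P = u" "last P = v"
    "hop_dist V E u v = enat (length P - 1)"
    by blast
  then show ?thesis
    using that unfolding geodesic_def by blast
qed

lemma hop_dist_edge:
  assumes "simple_graph V E" "E w w'"
  shows "hop_dist V E u w' \<le> hop_dist V E u w + 1"
proof (cases "hop_dist V E u w < \<infinity>")
  case True
  then obtain P where P: "geodesic V E P" "hd P = u" "last P = w"
    by (rule geodesic_exists)
  have "P \<noteq> []"
    using P(1) by (simp add: geodesic_def is_walk_def)
  have "is_walk V E [w, w']"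
    using simple_graph_edge[OF assms] assms(2) by (simp add: is_walk_def)
  then have "is_walk V E (P @ [w'])"
    using is_walk_append[of V E P "[w, w']"] P by (simp add: geodesic_def)
  then have "hop_dist V E u w' \<le> enat (length P)"
    using hop_dist_le_walk[of V E "P @ [w']"] P(2) \<open>P \<noteq> []\<close> by simp
  also have "\<dots> = hop_dist V E u w + 1"
    using P \<open>P \<noteq> []\<close> by (simp add: geodesic_def one_enat_def)
  finally show ?thesis .
qed simp

lemma geodesic_levels:
  assumes "geodesic V E P" "i < length P"
  shows "hop_dist V E (hd P) (P ! i) = enat i"
proof (rule antisym)
  have P: "is_walk V E P" "hop_dist V E (hd P) (last P) = enat (length P - 1)"
    using assms(1) by (simp_all add: geodesic_def)
  have "hd (take (Suc i) P) = hd P" "last (take (Suc i) P) = P ! i"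
    using assms(2) by (simp, simp add: take_Suc_conv_app_nth)
  then show "hop_dist V E (hd P) (P ! i) \<le> enat i"
    using hop_dist_le_walk[OF is_walk_take[OF P(1) assms(2)]] assms(2) by simp
  show "enat i \<le> hop_dist V E (hd P) (P ! i)"
  proof (rule ccontr)
    assume "\<not> enat i \<le> hop_dist V E (hd P) (P ! i)"
    then have short: "hop_dist V E (hd P) (P ! i) < enat i" by simp
    then have "hop_dist V E (hd P) (P ! i) < \<infinity>"
      using enat_ord_simps(4) less_trans by blast
    then obtain Q where Q: "geodesic V E Q" "hd Q = hd P" "last Q = P ! i"
      by (rule geodesic_exists)
    \<comment> \<open>replacing the first i steps of P by Q would give a shorter walk to last P\<close>
    have "is_walk V E Q" "Q \<noteq> []"
      using Q(1) by (simp_all add: geodesic_def is_walk_def)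
    have "last Q = hd (drop i P)"
      using Q(3) assms(2) by (simp add: hd_drop_conv_nth)
    note QP = is_walk_append[OF \<open>is_walk V E Q\<close> is_walk_drop[OF P(1) assms(2)] this]
    have "enat (length Q - 1) < enat i"
      using Q short by (simp add: geodesic_def)
    then have "length (Q @ tl (drop i P)) - 1 < length P - 1"
      using QP(4) assms(2) \<open>Q \<noteq> []\<close> by simp
    moreover have "hop_dist V E (hd P) (last P) \<le> enat (length (Q @ tl (drop i P)) - 1)"
      using hop_dist_le_walk[OF QP(1)] QP(2,3) Q(2) assms(2) by simp
    ultimately show False
      using P(2) by simp
  qed
qed

section \<open>Short cycles through an edge\<close>

definition del_edge :: "('a \<Rightarrow> 'a \<Rightarrow> bool) \<Rightarrow> 'a \<Rightarrow> 'a \<Rightarrow> 'a \<Rightarrow> 'a \<Rightarrow> bool" where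
  "del_edge E x y a b \<longleftrightarrow> E a b \<and> {a, b} \<noteq> {x, y}"

lemma geodesic_del_edge:
  assumes "geodesic V E P"
    and "hop_dist V E (hd P) x = hop_dist V E (hd P) y \<or>
      hop_dist V E (hd P) (last P) < hop_dist V E (hd P) y"
  shows "is_walk V (del_edge E x y) P"
proof -
  let ?d = "hop_dist V E (hd P)"
  have P: "is_walk V E P" "?d (last P) = enat (length P - 1)"
    using assms(1) by (simp_all add: geodesic_def)
  have "del_edge E x y (P ! i) (P ! Suc i)" if i: "Suc i < length P" for i
  proof -
    have lev: "?d (P ! i) = enat i" "?d (P ! Suc i) = enat (Suc i)"
      using geodesic_levels[OF assms(1)] i by simp_all
    have "enat i \<le> ?d (last P)" "enat (Suc i) \<le> ?d (last P)"
      using i P(2) by simp_all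
    then have "{P ! i, P ! Suc i} \<noteq> {x, y}"
      using assms(2) lev by (auto simp: doubleton_eq_iff)
    moreover have "E (P ! i) (P ! Suc i)"
      using P(1) i by (simp add: is_walk_def)
    ultimately show ?thesis
      by (simp add: del_edge_def)
  qed
  with P(1) show ?thesis
    by (simp add: is_walk_def)
qed

lemma girth_le_del_edge_walk:
  assumes "simple_graph V E" "E x y"
    and "is_walk V (del_edge E x y) W" "hd W = x" "last W = y"
  shows "girth V E \<le> enat (length W)"
proof -
  obtain C where C: "is_walk V (del_edge E x y) C" "hd C = x" "last C = y" "distinct C"
    "length C \<le> length W"
    using exists_distinct_walk[OF assms(3)] assms(4,5) by auto
  have "x \<noteq> y" "E y x"
    using simple_graph_edge[OF assms(1,2)] by auto
  have succ: "successively (del_edge E x y) C" and "C \<noteq> []"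
    using C(1) by (simp_all add: is_walk_iff_successively)
  have "3 \<le> length C"
    using \<open>C \<noteq> []\<close> C(2,3) succ \<open>x \<noteq> y\<close>
    by (cases C rule: remdups_adj.cases) (auto simp: del_edge_def Suc_le_eq)
  have "is_cycle V E C"
    unfolding is_cycle_def
  proof (intro conjI allI impI)
    show "3 \<le> length C" "distinct C" "set C \<subseteq> V"
      using \<open>3 \<le> length C\<close> C(1,4) by (simp_all add: is_walk_def)
    fix i assume i: "i < length C"
    show "E (C ! i) (C ! ((i + 1) mod length C))"
    proof (cases "Suc i < length C")
      case True
      then show ?thesis
        using successively_nth[OF succ] by (simp add: del_edge_def)
    next
      case False
      \<comment> \<open>the closing edge is the deleted edge x y itself\<close>
      then have "i = length C - 1"
        using i by simp
      then have "C ! i = y" "(i + 1) mod length C = 0" "C ! 0 = x"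
        using C(2,3) \<open>C \<noteq> []\<close> by (auto simp: last_conv_nth hd_conv_nth)
      then show ?thesis
        using \<open>E y x\<close> by simp
    qed
  qed
  then have "girth V E \<le> enat (length C)"
    unfolding girth_def by (intro Inf_lower) blast
  with C(5) show ?thesis
    by (meson enat_ord_simps(1) order_trans)
qed

lemma girth_le_two_del_edge_walks:
  assumes "simple_graph V E" "E x y"
    and P: "is_walk V (del_edge E x y) P" "hd P = s" "last P = x"
    and Q: "is_walk V (del_edge E x y) Q" "hd Q = s" "last Q = y"
  shows "girth V E \<le> enat (length P - 1) + enat (length Q - 1) + 1"
proof -
  have sym: "del_edge E x y a b \<Longrightarrow> del_edge E x y b a" for a b
    using simple_graph_edge[OF assms(1), of a b] by (auto simp: del_edge_def insert_commute)
  have "P \<noteq> []" "Q \<noteq> []"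
    using P(1) Q(1) by (simp_all add: is_walk_def)
  then have "last (rev P) = hd Q" "hd (rev P) = x"
    using P(2,3) Q(2) by (simp_all add: last_rev hd_rev)
  note W = is_walk_append[OF is_walk_rev[OF P(1) sym] Q(1) \<open>last (rev P) = hd Q\<close>]
  have "girth V E \<le> enat (length (rev P @ tl Q))"
    using girth_le_del_edge_walk[OF assms(1,2) W(1)] W(2,3) \<open>hd (rev P) = x\<close> Q(3) by simp
  also have "\<dots> = enat (length P - 1) + enat (length Q - 1) + 1"
    using W(4) \<open>P \<noteq> []\<close> \<open>Q \<noteq> []\<close> by (cases P; cases Q) (simp_all add: one_enat_def)
  finally show ?thesis .
qed

lemma del_edge_walk_to_far_end:
  assumes sg: "simple_graph V E" and fin: "hop_dist V E s y < \<infinity>"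
    and levels: "hop_dist V E s x = hop_dist V E s y \<or>
      (\<exists>w. E w y \<and> w \<noteq> x \<and> hop_dist V E s w + 1 = hop_dist V E s y)"
  obtains Q where "is_walk V (del_edge E x y) Q" "hd Q = s" "last Q = y"
    "enat (length Q - 1) = hop_dist V E s y"
proof (cases "hop_dist V E s x = hop_dist V E s y")
  case True
  obtain Q where "geodesic V E Q" "hd Q = s" "last Q = y"
    using fin by (rule geodesic_exists)
  with True show ?thesis
    using that geodesic_del_edge[of V E Q x y] by (simp add: geodesic_def)
next
  case False
  let ?d = "hop_dist V E s"
  from False obtain w where w: "E w y" "w \<noteq> x" "?d w + 1 = ?d y"
    using levels by blast
  have "?d w < ?d y"
    using w(3) fin by (cases "?d w") (auto simp: one_enat_def)
  then have "?d w < \<infinity>"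
    using fin by (rule less_trans)
  then obtain Pw where Pw: "geodesic V E Pw" "hd Pw = s" "last Pw = w"
    by (rule geodesic_exists)
  have "is_walk V (del_edge E x y) Pw"
    using geodesic_del_edge[of V E Pw x y] Pw \<open>?d w < ?d y\<close> by simp
  moreover have "is_walk V (del_edge E x y) [w, y]"
    using w simple_graph_edge[OF sg w(1)] by (auto simp: is_walk_def del_edge_def doubleton_eq_iff)
  ultimately have "is_walk V (del_edge E x y) (Pw @ [y])"
    using is_walk_append[of V "del_edge E x y" Pw "[w, y]"] Pw(3) by simp
  moreover have "Pw \<noteq> []"
    using Pw(1) by (simp add: geodesic_def is_walk_def)
  ultimately show ?thesis
    using that[of "Pw @ [y]"] Pw w(3) by (simp add: geodesic_def one_enat_def)
qed

lemma girth_le_dist_sum_edge: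
  assumes sg: "simple_graph V E" and "E x y" and fin: "hop_dist V E s y < \<infinity>"
    and levels: "hop_dist V E s x = hop_dist V E s y \<or>
      hop_dist V E s x < hop_dist V E s y \<and>
      (\<exists>w. E w y \<and> w \<noteq> x \<and> hop_dist V E s w + 1 = hop_dist V E s y)"
  shows "girth V E \<le> hop_dist V E s x + hop_dist V E s y + 1"
proof -
  have "hop_dist V E s x \<le> hop_dist V E s y"
    using levels by auto
  then have "hop_dist V E s x < \<infinity>"
    using fin by (rule le_less_trans)
  then obtain P where P: "geodesic V E P" "hd P = s" "last P = x"
    by (rule geodesic_exists)
  have P_avoids: "is_walk V (del_edge E x y) P"
    using geodesic_del_edge[OF P(1)] P(2,3) levels by auto
  obtain Q where Q: "is_walk V (del_edge E x y) Q" "hd Q = s" "last Q = y"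
    "enat (length Q - 1) = hop_dist V E s y"
    using del_edge_walk_to_far_end[OF sg fin] levels by blast
  have "girth V E \<le> enat (length P - 1) + enat (length Q - 1) + 1"
    by (rule girth_le_two_del_edge_walks[OF sg \<open>E x y\<close> P_avoids P(2,3) Q(1-3)])
  also have "\<dots> = hop_dist V E s x + hop_dist V E s y + 1"
    using P Q(4) by (simp add: geodesic_def)
  finally show ?thesis .
qed

section \<open>Walking around a cycle\<close>

lemma periodic_mod:
  fixes f :: "nat \<Rightarrow> 'a"
  assumes "\<And>t. f (t + g) = f t"
  shows "f (t mod g) = f t"
proof -
  have "f (r + m * g) = f r" for r m
  proof (induction m)
    case (Suc m)
    have "f (r + Suc m * g) = f ((r + m * g) + g)"
      by (simp add: algebra_simps)
    also have "\<dots> = f r"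
      using assms Suc.IH by simp
    finally show ?case .
  qed simp
  then show ?thesis
    by (metis mod_div_mult_eq)
qed

lemma is_cycle_periodic:
  assumes "is_cycle V E c"
  defines "f \<equiv> \<lambda>t. c ! (t mod length c)"
  shows "f (t + length c) = f t" "E (f t) (f (Suc t))" "f (Suc (Suc t)) \<noteq> f t" "f t \<in> set c"
    and "v \<in> set c \<Longrightarrow> \<exists>j. f j = v"
proof -
  let ?n = "length c"
  have "3 \<le> ?n" "distinct c"
    using assms(1) by (simp_all add: is_cycle_def)
  then have idx: "t mod ?n < ?n" for t
    by (intro mod_less_divisor) linarith
  show "f (t + ?n) = f t"
    by (simp add: f_def)
  have "E (c ! (t mod ?n)) (c ! (Suc (t mod ?n) mod ?n))"
    using assms(1) idx[of t] unfolding is_cycle_def by simp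
  then show "E (f t) (f (Suc t))"
    by (simp add: f_def mod_Suc_eq)
  have "Suc (Suc t) mod ?n \<noteq> t mod ?n"
  proof
    assume "Suc (Suc t) mod ?n = t mod ?n"
    then have "?n dvd Suc (Suc t) - t"
      using mod_eq_dvd_iff_nat[of t "Suc (Suc t)" ?n] by simp
    then have "?n \<le> 2"
      by (simp add: dvd_imp_le)
    with \<open>3 \<le> ?n\<close> show False
      by simp
  qed
  then show "f (Suc (Suc t)) \<noteq> f t"
    using \<open>distinct c\<close> idx by (simp add: f_def nth_eq_iff_index_eq)
  show "f t \<in> set c"
    using idx by (simp add: f_def)
  show "\<exists>j. f j = v" if v: "v \<in> set c"
  proof -
    obtain j where "j < ?n" "c ! j = v"
      using v by (auto simp: in_set_conv_nth)
    then show ?thesis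
      by (intro exI[of _ j]) (simp add: f_def)
  qed
qed

lemma hop_dist_along_walk:
  assumes sg: "simple_graph V E" and edge: "\<And>t. E (f t) (f (Suc t))"
  shows "hop_dist V E s (f (t + n)) \<le> hop_dist V E s (f t) + enat n"
    and "hop_dist V E s (f t) \<le> hop_dist V E s (f (t + n)) + enat n"
proof -
  let ?d = "hop_dist V E s"
  show "?d (f (t + n)) \<le> ?d (f t) + enat n"
  proof (induction n)
    case (Suc n)
    have "?d (f (t + Suc n)) \<le> ?d (f (t + n)) + 1"
      using hop_dist_edge[OF sg edge[of "t + n"]] by simp
    also have "\<dots> \<le> ?d (f t) + enat (Suc n)"
      using add_right_mono[OF Suc.IH, of 1] by (simp add: one_enat_def add.assoc)
    finally show ?case .
  qed (simp add: zero_enat_def[symmetric])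
  show "?d (f t) \<le> ?d (f (t + n)) + enat n"
  proof (induction n)
    case (Suc n)
    have "E (f (t + Suc n)) (f (t + n))"
      using simple_graph_edge[OF sg edge[of "t + n"]] by simp
    then have "?d (f (t + n)) \<le> ?d (f (t + Suc n)) + 1"
      by (rule hop_dist_edge[OF sg])
    from Suc.IH have "?d (f t) \<le> ?d (f (t + n)) + enat n" .
    also have "\<dots> \<le> ?d (f (t + Suc n)) + 1 + enat n"
      by (rule add_right_mono) fact
    also have "\<dots> = ?d (f (t + Suc n)) + enat (Suc n)"
      by (simp add: one_enat_def add.assoc)
    finally show ?case .
  qed (simp add: zero_enat_def[symmetric])
qed

lemma periodic_offset:
  fixes f :: "nat \<Rightarrow> 'a"
  assumes "0 < g" and periodic: "\<And>t. f (t + g) = f t"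
  obtains i where "i < g" "f (b + i) = f a" "f (b + Suc i) = f (Suc a)"
proof
  define i where "i = (a + (g - b mod g)) mod g"
  show "i < g"
    using \<open>0 < g\<close> by (simp add: i_def)
  have "b mod g < g"
    using \<open>0 < g\<close> by simp
  moreover have "b = b div g * g + b mod g" "(b div g + 1) * g = b div g * g + g"
    by simp_all
  ultimately have "b + (a + (g - b mod g)) = a + (b div g + 1) * g"
    by linarith
  then have "(b + i) mod g = a mod g"
    unfolding i_def by (metis mod_add_right_eq mod_mult_self1)
  then show "f (b + i) = f a" "f (b + Suc i) = f (Suc a)"
    using periodic_mod[of f g, OF periodic] by (metis, metis add_Suc_right mod_Suc_eq)
qed

lemma hop_dist_periodic_walk:
  assumes sg: "simple_graph V E" and "0 < g" and periodic: "\<And>t. f (t + g) = f t"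
    and edge: "\<And>t. E (f t) (f (Suc t))"
  shows "hop_dist V E s (f a) + hop_dist V E s (f (Suc a)) + 1 \<le> 2 * hop_dist V E s (f b) + enat g"
proof -
  let ?d = "hop_dist V E s"
  \<comment> \<open>walk i steps forward from f b to f a, and the remaining g - i - 1 steps backward to f (Suc a)\<close>
  obtain i where "i < g" "f (b + i) = f a" "f (b + Suc i) = f (Suc a)"
    using periodic_offset[of g f, OF \<open>0 < g\<close> periodic] .
  then have "?d (f a) \<le> ?d (f b) + enat i"
    and "?d (f (Suc a)) \<le> ?d (f b) + enat (g - Suc i)"
    using hop_dist_along_walk(1)[where f = f and s = s and t = b and n = i, OF sg edge]
      hop_dist_along_walk(2)[where f = f and s = s and t = "b + Suc i" and n = "g - Suc i",
        OF sg edge]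
      periodic[of b]
    by simp_all
  then have "?d (f a) + ?d (f (Suc a)) + 1
      \<le> (?d (f b) + enat i) + (?d (f b) + enat (g - Suc i)) + 1"
    by (intro add_mono) simp_all
  also have "\<dots> = 2 * ?d (f b) + enat (i + (g - Suc i) + 1)"
    by (simp add: mult_2 one_enat_def ac_simps)
  also have "i + (g - Suc i) + 1 = g"
    using \<open>i < g\<close> by simp
  finally show ?thesis .
qed

lemma closed_walk_has_non_parent_edge:
  fixes f :: "nat \<Rightarrow> 'a" and par :: "'a \<Rightarrow> 'a option" and lev :: "'a \<Rightarrow> enat"
  assumes "0 < g" and periodic: "\<And>t. f (t + g) = f t"
    and no_backtrack: "\<And>t. f (Suc (Suc t)) \<noteq> f t"
    and finite: "\<And>t. lev (f t) \<noteq> \<infinity>"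
    and par: "\<And>t w. par (f t) = Some w \<Longrightarrow> lev w + 1 = lev (f t)"
  shows "\<exists>t. par (f t) \<noteq> Some (f (Suc t)) \<and> par (f (Suc t)) \<noteq> Some (f t)"
proof (rule ccontr)
  assume "\<not> ?thesis"
  then have step: "par (f t) = Some (f (Suc t)) \<or> par (f (Suc t)) = Some (f t)" for t
    by blast
  have no_level_shift: False if "lev (f t) = lev (f t) + enat g" for t
    using that finite[of t] \<open>0 < g\<close> by (cases "lev (f t)") simp_all
  show False
  proof (cases "\<exists>t. par (f (Suc t)) = Some (f t)")
    case True
    then obtain t where "par (f (Suc t)) = Some (f t)"
      by blast
    \<comment> \<open>once the walk climbs a parent edge it must keep climbing\<close>
    then have climb: "par (f (Suc (t + n))) = Some (f (t + n))" for n
    proof (induction n)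
      case (Suc n)
      then show ?case
        using step[of "Suc (t + n)"] no_backtrack[of "t + n"] by auto
    qed simp
    have "lev (f (t + n)) = lev (f t) + enat n" for n
    proof (induction n)
      case (Suc n)
      have "lev (f (t + Suc n)) = lev (f (t + n)) + 1"
        using par[OF climb[of n]] by simp
      with Suc.IH show ?case
        by (simp add: one_enat_def add.assoc)
    qed (simp add: zero_enat_def[symmetric])
    from this[of g] show False
      using no_level_shift[of t] periodic[of t] by simp
  next
    case False
    then have descend: "par (f t) = Some (f (Suc t))" for t
      using step by blast
    have "lev (f t) = lev (f (t + n)) + enat n" for t n
    proof (induction n)
      case (Suc n)
      have "lev (f (t + n)) = lev (f (t + Suc n)) + 1"
        using par[OF descend[of "t + n"]] by simp
      with Suc.IH show ?case
        by (simp add: one_enat_def add.assoc)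
    qed (simp add: zero_enat_def[symmetric])
    from this[of 0 g] show False
      using no_level_shift[of 0] periodic[of 0] by (simp add: enat_0_iff)
  qed
qed

section \<open>The procedure Estimate\<close>

lemma Ucl_subset: "Ucl V E ID S k v \<subseteq> S"
  unfolding Ucl_def by auto

lemma valid_parents_Some:
  assumes "valid_parents V E ID S k p" "z \<in> V" "s \<in> Ucl V E ID S k z" "p s z = Some w"
  shows "hop_dist V E s w + 1 = hop_dist V E s z"
proof -
  have H: "(z = s \<longrightarrow> p s z = None) \<and>
    (z \<noteq> s \<longrightarrow> (\<exists>w. p s z = Some w \<and> E z w \<and> hop_dist V E s w + 1 = hop_dist V E s z))"
    using bspec[OF bspec[OF assms(1)[unfolded valid_parents_def] assms(2)] assms(3)] .
  have "z \<noteq> s"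
    using conjunct1[OF H] assms(4) by auto
  then show ?thesis
    using conjunct2[OF H] assms(4) by auto
qed

lemma valid_parents_non_root:
  assumes "valid_parents V E ID S k p" "z \<in> V" "s \<in> Ucl V E ID S k z" "z \<noteq> s"
  obtains w where "p s z = Some w" "E z w" "hop_dist V E s w + 1 = hop_dist V E s z"
  using assms unfolding valid_parents_def by blast

lemma estimate_le_candidate:
  assumes "y \<in> V" "E y x" "s \<in> Ucl V E ID S k y" "s \<in> Ucl V E ID S k x"
    and "p s x \<noteq> Some y" "p s y \<noteq> Some x"
  shows "estimate V E ID S k p \<le> hop_dist V E s x + hop_dist V E s y + 1"
proof -
  have "M_at V E ID S k p y \<le> hop_dist V E s x + hop_dist V E s y + 1"
    unfolding M_at_def using assms(2-) by (intro Inf_lower) blast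
  with assms(1) show ?thesis
    unfolding estimate_def by (rule INF_lower2)
qed

lemma girth_le_candidate_far_end:
  assumes sg: "simple_graph V E" and conn: "connected_graph V E" and "S \<subseteq> V"
    and vp: "valid_parents V E ID S k p" and "y \<in> V" "E y x"
    and sy: "s \<in> Ucl V E ID S k y" and "p s y \<noteq> Some x"
    and le: "hop_dist V E s x \<le> hop_dist V E s y"
  shows "girth V E \<le> hop_dist V E s x + hop_dist V E s y + 1"
proof -
  let ?d = "hop_dist V E s"
  have "s \<in> V"
    using sy Ucl_subset[of V E ID S k y] \<open>S \<subseteq> V\<close> by auto
  then have fin: "?d y < \<infinity>"
    using conn \<open>y \<in> V\<close> unfolding connected_graph_def by blast
  have "E x y"
    using simple_graph_edge[OF sg \<open>E y x\<close>] by simp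
  have "?d x = ?d y \<or> ?d x < ?d y \<and> (\<exists>w. E w y \<and> w \<noteq> x \<and> ?d w + 1 = ?d y)"
  proof (cases "?d x = ?d y")
    case False
    with le have "?d x < ?d y"
      by simp
    have "y \<noteq> s"
    proof
      assume "y = s"
      then have "?d y = 0"
        using hop_dist_self[OF \<open>s \<in> V\<close>] by simp
      with \<open>?d x < ?d y\<close> show False
        by simp
    qed
    then obtain w where "p s y = Some w" "E y w" "?d w + 1 = ?d y"
      by (rule valid_parents_non_root[OF vp \<open>y \<in> V\<close> sy])
    moreover from this have "E w y" "w \<noteq> x"
      using simple_graph_edge[OF sg \<open>E y w\<close>] \<open>p s y \<noteq> Some x\<close> by auto
    ultimately show ?thesis
      using \<open>?d x < ?d y\<close> by blast
  qed simp
  then show ?thesis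
    by (rule girth_le_dist_sum_edge[OF sg \<open>E x y\<close> fin])
qed

lemma girth_le_estimate:
  assumes sg: "simple_graph V E" and conn: "connected_graph V E" and SV: "S \<subseteq> V"
    and vp: "valid_parents V E ID S k p"
  shows "girth V E \<le> estimate V E ID S k p"
  unfolding estimate_def M_at_def
proof (intro INF_greatest Inf_greatest)
  fix y z
  assume "y \<in> V" and "z \<in> {hop_dist V E s x + hop_dist V E s y + 1 | x s.
    E y x \<and> s \<in> Ucl V E ID S k y \<and> s \<in> Ucl V E ID S k x \<and> p s x \<noteq> Some y \<and> p s y \<noteq> Some x}"
  then obtain x s where z: "z = hop_dist V E s x + hop_dist V E s y + 1" and "E y x"
    and U: "s \<in> Ucl V E ID S k y" "s \<in> Ucl V E ID S k x"
    and p: "p s x \<noteq> Some y" "p s y \<noteq> Some x"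
    by blast
  have "x \<in> V" "E x y"
    using simple_graph_edge[OF sg \<open>E y x\<close>] by auto
  show "girth V E \<le> z"
  proof (cases "hop_dist V E s x \<le> hop_dist V E s y")
    case True
    then show ?thesis
      using girth_le_candidate_far_end[OF sg conn SV vp \<open>y \<in> V\<close> \<open>E y x\<close> U(1) p(2)] z by simp
  next
    case False
    then show ?thesis
      using girth_le_candidate_far_end[OF sg conn SV vp \<open>x \<in> V\<close> \<open>E x y\<close> U(2) p(1)] z
      by (simp add: add.commute)
  qed
qed

lemma dS_attained:
  assumes "covered_shortest V E ID S k \<noteq> {}"
  obtains c s v where "c \<in> covered_shortest V E ID S k" "covers V E ID S k s c" "v \<in> set c"
    "dS V E ID S k = hop_dist V E s v"
proof -
  obtain c where c: "c \<in> covered_shortest V E ID S k" "dS V E ID S k = dist_S_cycle V E ID S k c"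
    using enat_Inf_in[of "dist_S_cycle V E ID S k ` covered_shortest V E ID S k"] assms
    unfolding dS_def by auto
  then have "{dist_src_cycle V E s c | s. s \<in> S \<and> covers V E ID S k s c} \<noteq> {}"
    unfolding covered_shortest_def by auto
  from enat_Inf_in[OF this] obtain s where s: "covers V E ID S k s c"
    "dist_S_cycle V E ID S k c = dist_src_cycle V E s c"
    unfolding dist_S_cycle_def by auto
  have "set c \<noteq> {}"
    using c(1) by (auto simp: covered_shortest_def shortest_cycle_def is_cycle_def)
  then obtain v where "v \<in> set c" "dist_src_cycle V E s c = hop_dist V E s v"
    using enat_Inf_in[of "hop_dist V E s ` set c"] unfolding dist_src_cycle_def by auto
  with c s show ?thesis
    using that by simp
qed

lemma estimate_le_twice_dS_plus_girth:
  assumes sg: "simple_graph V E" and conn: "connected_graph V E" and SV: "S \<subseteq> V"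
    and vp: "valid_parents V E ID S k p" and "covered_shortest V E ID S k \<noteq> {}"
  shows "estimate V E ID S k p \<le> 2 * dS V E ID S k + girth V E"
proof -
  obtain c s v where c: "c \<in> covered_shortest V E ID S k" and cov: "covers V E ID S k s c"
    and "v \<in> set c" and dS: "dS V E ID S k = hop_dist V E s v"
    using dS_attained[OF assms(5)] .
  have cyc: "is_cycle V E c" and girth: "girth V E = enat (length c)"
    using c by (auto simp: covered_shortest_def shortest_cycle_def)
  have "0 < length c"
    using cyc unfolding is_cycle_def by linarith
  have "s \<in> V" and U: "\<And>z. z \<in> set c \<Longrightarrow> s \<in> Ucl V E ID S k z"
    using cov SV by (auto simp: covers_def)
  define f where "f t = c ! (t mod length c)" for t
  note f = is_cycle_periodic[OF cyc, folded f_def]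
  have "f t \<in> V" for t
    using f(4) cyc by (auto simp: is_cycle_def)
  obtain t where t: "p s (f t) \<noteq> Some (f (Suc t))" "p s (f (Suc t)) \<noteq> Some (f t)"
  proof -
    have "hop_dist V E s (f t) \<noteq> \<infinity>" for t
      using conn \<open>s \<in> V\<close> \<open>f t \<in> V\<close> by (auto simp: connected_graph_def)
    moreover have "hop_dist V E s w + 1 = hop_dist V E s (f t)" if "p s (f t) = Some w" for t w
      using valid_parents_Some[OF vp \<open>f t \<in> V\<close> U[OF f(4)] that] .
    ultimately show ?thesis
      using closed_walk_has_non_parent_edge[OF \<open>0 < length c\<close> f(1,3)] that by blast
  qed
  obtain j where "f j = v"
    using f(5) \<open>v \<in> set c\<close> by blast
  have "estimate V E ID S k p \<le> hop_dist V E s (f (Suc t)) + hop_dist V E s (f t) + 1"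
    using estimate_le_candidate[where p = p and s = s,
        OF \<open>f t \<in> V\<close> f(2)[of t] U[OF f(4)[of t]] U[OF f(4)[of "Suc t"]] t(2,1)] .
  also have "\<dots> \<le> 2 * hop_dist V E s (f j) + enat (length c)"
    using hop_dist_periodic_walk[OF sg \<open>0 < length c\<close> f(1,2), of s t j] by (simp add: ac_simps)
  finally show ?thesis
    using dS girth \<open>f j = v\<close> by simp
qed

theorem mainTheorem7:
  fixes V :: "'a set" and E :: "'a \<Rightarrow> 'a \<Rightarrow> bool" and ID :: "'a \<Rightarrow> nat"
    and S :: "'a set" and k :: nat and p :: "'a \<Rightarrow> 'a \<Rightarrow> 'a option"
  assumes "simple_graph V E" and "connected_graph V E" and "inj_on ID V"
    and "S \<subseteq> V" and "valid_parents V E ID S k p"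
  shows "girth V E \<le> estimate V E ID S k p \<and>
    (covered_shortest V E ID S k \<noteq> {} \<longrightarrow>
       estimate V E ID S k p \<le> 2 * dS V E ID S k + girth V E)"
  using girth_le_estimate[OF assms(1,2,4,5)] estimate_le_twice_dS_plus_girth[OF assms(1,2,4,5)]
  by blast

end
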